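(* Let $O=(Y,D,Z)$ be a random vector with outcome $Y\in\mathbb{R}$, exposure $D\in\mathbb{R}$, and candidate instruments $Z=(Z_1,\dots,Z_p)\in\{0,1\}^p$ (a row vector), $p\ge 2$, with $\mu^*=(\mu_1^*,\dots,\mu_p^* )=\mathbb{E}(Z)$. Suppose the following hold. (ALICE model) There are potential outcomes $Y(d,z)$ for $d\in\mathcal D$, $z\in\{0,1\}^p$, with $Y=Y(D,Z)$, and parameters $\beta^*\in\mathbb{R}$, $\zeta^*,\psi^*\in\mathbb{R}^p$ such that for all $d,d'\in\mathcal D$ and $z,z'\in\{0,1\}^p$, $$Y(d',z')-Y(d,z)=(d'-d)\beta^*+(z'-z)\zeta^*,\qquad \mathbb{E}\{Y(0,0)\mid Z\}=Z\psi^*.$$ (Independent instruments) $Z_1,\dots,Z_p$ are mutually independent. (Interaction relevance) For a fixed integer $q$ with $2\le q\le p$, the $r$-dimensional vector $$M=-\mathbb{E}\{(\bar Z_{2,\mu^*}^\top,\dots,\bar Z_{q,\mu^*}^\top)^\top D\}$$ is nonzero, where $r=\sum_{k=2}^q\binom{p}{k}$. Define the $r$-dimensional moment function $m(O;\beta,\mu^* )=(\bar Z_{2,\mu^*}^\top,\dots,\bar Z_{q,\mu^*}^\top)^\top (Y-D\beta)$. Then $\beta=\beta^*$ is the unique solution in $\beta\in\mathbb{R}$ of the population moment equation $\mathbb{E}\{m(O;\beta,\mu^* )\}=0$.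
   Context: For $1\le k\le p$ and $\mu\in\mathbb{R}^p$, $\bar Z_{k,\mu}$ denotes the column vector (in a fixed order) of all $\binom{p}{k}$ demeaned $k$-th order interactions $\prod_{j\in x}(Z_j-\mu_j)$, $x$ ranging over the subsets of $\{1,\dots,p\}$ of size $k$. All expectations appearing are assumed to exist and be finite. *)

theory Defs
  imports "HOL-Probability.Probability"
begin

definition demeaned_interaction ::
  "(nat \<Rightarrow> 'a \<Rightarrow> real) \<Rightarrow> (nat \<Rightarrow> real) \<Rightarrow> nat set \<Rightarrow> 'a \<Rightarrow> real" where
  "demeaned_interaction Z \<mu> x \<omega> = (\<Prod>j\<in>x. (Z j \<omega> - \<mu> j))"

text \<open>Index set of the stacked vector of interactions of orders 2..q among p instruments.\<close>
definition interaction_index :: "nat \<Rightarrow> nat \<Rightarrow> nat set set" where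
  "interaction_index p q = {x. x \<subseteq> {..<p} \<and> 2 \<le> card x \<and> card x \<le> q}"

definition binvecs :: "nat \<Rightarrow> (nat \<Rightarrow> real) set" where
  "binvecs p = PiE {..<p} (\<lambda>_. {0, 1})"

definition instr_sigma :: "'a measure \<Rightarrow> (nat \<Rightarrow> 'a \<Rightarrow> real) \<Rightarrow> nat \<Rightarrow> 'a measure" where
  "instr_sigma M Z p = vimage_algebra (space M) (\<lambda>\<omega>. restrict (\<lambda>j. Z j \<omega>) {..<p})
      (PiM {..<p} (\<lambda>_. borel))"

end

theory Submission
  imports Defs
begin

text \<open>Under the ALICE model the observed outcome is \<open>Y = Y(0,0) + D\<beta>* + Z\<zeta>*\<close>, so
  \<open>E[W\<^sub>x (Y - D\<beta>)] = E[W\<^sub>x Y(0,0)] + E[W\<^sub>x Z]\<zeta>* + (\<beta>* - \<beta>) E[W\<^sub>x D]\<close> for every demeaned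
  interaction \<open>W\<^sub>x\<close> of order at least two. Both \<open>E[W\<^sub>x Y(0,0)] = E[W\<^sub>x E(Y(0,0) | Z)] = E[W\<^sub>x Z]\<psi>*\<close>
  and \<open>E[W\<^sub>x Z]\<zeta>*\<close> are combinations of the moments \<open>E[W\<^sub>x Z\<^sub>j]\<close>, which vanish: \<open>x\<close> contains
  some \<open>i \<noteq> j\<close>, and by independence the factor \<open>Z\<^sub>i - \<mu>\<^sub>i\<close> splits off with mean zero. Hence
  the moment equation reads \<open>(\<beta>* - \<beta>) E[W\<^sub>x D] = 0\<close> for all \<open>x\<close>, and relevance forces
  \<open>\<beta> = \<beta>*\<close>.\<close>

lemma abs_demeaned_interaction_le:
  assumes "\<And>j. j \<in> x \<Longrightarrow> \<bar>Z j \<omega>\<bar> \<le> 1"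
  shows "\<bar>demeaned_interaction Z \<mu> x \<omega>\<bar> \<le> (\<Prod>j\<in>x. 1 + \<bar>\<mu> j\<bar>)"
  unfolding demeaned_interaction_def abs_prod
proof (rule prod_mono)
  fix j assume "j \<in> x"
  then show "0 \<le> \<bar>Z j \<omega> - \<mu> j\<bar> \<and> \<bar>Z j \<omega> - \<mu> j\<bar> \<le> 1 + \<bar>\<mu> j\<bar>"
    using assms[of j] by linarith
qed

lemma borel_measurable_demeaned_interaction:
  assumes "\<And>j. j \<in> x \<Longrightarrow> Z j \<in> borel_measurable M"
  shows "demeaned_interaction Z \<mu> x \<in> borel_measurable M"
  unfolding demeaned_interaction_def[abs_def] using assms by measurable

lemma subalgebra_instr_sigma:
  assumes "\<And>j. j < p \<Longrightarrow> Z j \<in> borel_measurable M"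
  shows "subalgebra M (instr_sigma M Z p)"
proof -
  have Z_vec: "(\<lambda>\<omega>. restrict (\<lambda>j. Z j \<omega>) {..<p}) \<in> M \<rightarrow>\<^sub>M PiM {..<p} (\<lambda>_. borel)"
    using assms by measurable
  show ?thesis
    unfolding subalgebra_def instr_sigma_def
    using measurable_space[OF Z_vec] measurable_sets[OF Z_vec]
    by (auto simp: sets_vimage_algebra2)
qed

lemma demeaned_interaction_measurable_instr_sigma:
  assumes "x \<subseteq> {..<p}"
  shows "demeaned_interaction Z \<mu> x \<in> borel_measurable (instr_sigma M Z p)"
proof -
  define g where "g z = (\<Prod>j\<in>x. z j - \<mu> j)" for z :: "nat \<Rightarrow> real"
  have "g \<in> borel_measurable (PiM {..<p} (\<lambda>_. borel))"
    unfolding g_def using assms by (intro borel_measurable_prod borel_measurable_diff) auto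
  then have "(\<lambda>\<omega>. g (restrict (\<lambda>j. Z j \<omega>) {..<p})) \<in> borel_measurable (instr_sigma M Z p)"
    unfolding instr_sigma_def
    by (rule measurable_compose[OF measurable_vimage_algebra1, rotated]) (auto simp: space_PiM)
  moreover have "(\<lambda>\<omega>. g (restrict (\<lambda>j. Z j \<omega>) {..<p})) = demeaned_interaction Z \<mu> x"
    unfolding g_def demeaned_interaction_def using assms by (intro ext prod.cong) auto
  ultimately show ?thesis by simp
qed

lemma alice_outcome_decomposition:
  assumes alice: "\<And>d d' z z'. d \<in> Dset \<Longrightarrow> d' \<in> Dset \<Longrightarrow> z \<in> binvecs p \<Longrightarrow> z' \<in> binvecs p \<Longrightarrow>
      Ypo d' z' - Ypo d z = (d' - d) * \<beta> + (\<Sum>j<p. (z' j - z j) * \<zeta> j)"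
    and "0 \<in> Dset" "d \<in> Dset" "z \<in> binvecs p"
  shows "Ypo d z = Ypo 0 (restrict (\<lambda>_. 0) {..<p}) + d * \<beta> + (\<Sum>j<p. z j * \<zeta> j)"
proof -
  have "restrict (\<lambda>_. 0) {..<p} \<in> binvecs p"
    unfolding binvecs_def by auto
  from alice[OF \<open>0 \<in> Dset\<close> \<open>d \<in> Dset\<close> this \<open>z \<in> binvecs p\<close>] show ?thesis
    by (simp add: algebra_simps)
qed

lemma unique_solution_restrict_mult_eq_0:
  fixes c :: "'a \<Rightarrow> real"
  assumes "\<exists>x\<in>I. c x \<noteq> 0"
  shows "{\<beta>. (\<lambda>x\<in>I. (b - \<beta>) * c x) = (\<lambda>x\<in>I. 0)} = {b}"
proof -
  obtain x where "x \<in> I" "c x \<noteq> 0"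
    using assms by blast
  have "\<beta> = b" if "(\<lambda>x\<in>I. (b - \<beta>) * c x) = (\<lambda>x\<in>I. 0)" for \<beta>
    using fun_cong[OF that, of x] \<open>x \<in> I\<close> \<open>c x \<noteq> 0\<close> by simp
  then show ?thesis by (auto intro!: restrict_ext)
qed

context prob_space
begin

lemma integrable_demeaned_interaction_mult:
  assumes "\<And>j. j \<in> x \<Longrightarrow> Z j \<in> borel_measurable M"
    and "\<And>j \<omega>. j \<in> x \<Longrightarrow> \<omega> \<in> space M \<Longrightarrow> \<bar>Z j \<omega>\<bar> \<le> 1"
    and "integrable M f"
  shows "integrable M (\<lambda>\<omega>. demeaned_interaction Z \<mu> x \<omega> * f \<omega>)"
proof (rule Bochner_Integration.integrable_bound)
  show "integrable M (\<lambda>\<omega>. (\<Prod>j\<in>x. 1 + \<bar>\<mu> j\<bar>) * f \<omega>)"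
    using assms(3) by simp
  show "(\<lambda>\<omega>. demeaned_interaction Z \<mu> x \<omega> * f \<omega>) \<in> borel_measurable M"
    using borel_measurable_demeaned_interaction[OF assms(1)] assms(3) by measurable
  show "AE \<omega> in M. norm (demeaned_interaction Z \<mu> x \<omega> * f \<omega>) \<le> norm ((\<Prod>j\<in>x. 1 + \<bar>\<mu> j\<bar>) * f \<omega>)"
  proof (rule AE_I2)
    fix \<omega> assume "\<omega> \<in> space M"
    then have "\<bar>demeaned_interaction Z \<mu> x \<omega>\<bar> \<le> (\<Prod>j\<in>x. 1 + \<bar>\<mu> j\<bar>)"
      using assms(2) by (intro abs_demeaned_interaction_le)
    then show "norm (demeaned_interaction Z \<mu> x \<omega> * f \<omega>) \<le> norm ((\<Prod>j\<in>x. 1 + \<bar>\<mu> j\<bar>) * f \<omega>)"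
      by (auto simp: abs_mult intro!: mult_right_mono)
  qed
qed

lemma integral_demeaned_interaction_mult_eq_0:
  assumes indep: "indep_vars (\<lambda>_. borel) Z I"
    and bounded: "\<And>j \<omega>. j \<in> I \<Longrightarrow> \<omega> \<in> space M \<Longrightarrow> \<bar>Z j \<omega>\<bar> \<le> 1"
    and x: "x \<subseteq> I" "finite x" and "j \<in> I" "i \<in> x" "i \<noteq> j"
  shows "(\<integral>\<omega>. demeaned_interaction Z (\<lambda>k. expectation (Z k)) x \<omega> * Z j \<omega> \<partial>M) = 0"
proof -
  \<comment> \<open>\<open>W\<^sub>x Z\<^sub>j\<close> as a product of functions of the single coordinates \<open>Z\<^sub>k\<close>, \<open>k \<in> insert j x\<close>\<close>
  define \<phi> where "\<phi> k t = (if k \<in> x then t - expectation (Z k) else 1) * (if k = j then t else 1)"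
    for k t
  define S where "S = insert j x"
  have S: "finite S" "S \<subseteq> I"
    using x \<open>j \<in> I\<close> by (auto simp: S_def)
  have [measurable]: "\<phi> k \<in> borel_measurable borel" for k
    unfolding \<phi>_def by measurable
  have Z_meas: "Z k \<in> borel_measurable M" if "k \<in> I" for k
    using indep that by (auto simp: indep_vars_def)
  have factor_integrable: "integrable M (\<lambda>\<omega>. \<phi> k (Z k \<omega>))" if "k \<in> S" for k
  proof (rule integrable_const_bound[where B="1 + \<bar>expectation (Z k)\<bar>"])
    have "\<bar>\<phi> k t\<bar> \<le> 1 + \<bar>expectation (Z k)\<bar>" if "\<bar>t\<bar> \<le> 1" for t
    proof -
      have "\<bar>t - expectation (Z k)\<bar> \<le> 1 + \<bar>expectation (Z k)\<bar>"
        using that by linarith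
      with that show ?thesis
        unfolding \<phi>_def abs_mult by (auto intro: mult_le_one order.trans[OF mult_right_le_one_le])
    qed
    then show "AE \<omega> in M. norm (\<phi> k (Z k \<omega>)) \<le> 1 + \<bar>expectation (Z k)\<bar>"
      using bounded[of k] that S by auto
  qed (use Z_meas that S in auto)
  have factorise: "demeaned_interaction Z (\<lambda>k. expectation (Z k)) x \<omega> * Z j \<omega> = (\<Prod>k\<in>S. \<phi> k (Z k \<omega>))"
    for \<omega>
    unfolding \<phi>_def prod.distrib demeaned_interaction_def S_def
    using x by (simp add: prod.If_cases Int_absorb1 Int_absorb2 subset_insertI prod.delta)
  have "(\<integral>\<omega>. demeaned_interaction Z (\<lambda>k. expectation (Z k)) x \<omega> * Z j \<omega> \<partial>M)
      = (\<Prod>k\<in>S. \<integral>\<omega>. \<phi> k (Z k \<omega>) \<partial>M)"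
  proof -
    have "indep_vars (\<lambda>_. borel) (\<lambda>k \<omega>. \<phi> k (Z k \<omega>)) S"
      by (rule indep_vars_compose2[OF indep_vars_subset[OF indep \<open>S \<subseteq> I\<close>]]) simp
    with \<open>finite S\<close> factor_integrable show ?thesis
      by (simp add: factorise indep_vars_lebesgue_integral)
  qed
  also have "\<dots> = 0"
  proof (rule prod_zero[OF \<open>finite S\<close>], intro bexI)
    have "integrable M (Z i)"
      using \<open>i \<in> x\<close> x bounded Z_meas by (intro integrable_const_bound[where B=1]) auto
    then show "(\<integral>\<omega>. \<phi> i (Z i \<omega>) \<partial>M) = 0"
      using \<open>i \<in> x\<close> \<open>i \<noteq> j\<close> by (simp add: \<phi>_def prob_space)
  qed (use \<open>i \<in> x\<close> in \<open>simp add: S_def\<close>)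
  finally show ?thesis .
qed

lemma integral_demeaned_interaction_mult_linear_eq_0:
  assumes indep: "indep_vars (\<lambda>_. borel) Z I"
    and bounded: "\<And>j \<omega>. j \<in> I \<Longrightarrow> \<omega> \<in> space M \<Longrightarrow> \<bar>Z j \<omega>\<bar> \<le> 1"
    and x: "x \<subseteq> I" "finite x" "2 \<le> card x" and J: "finite J" "J \<subseteq> I"
  shows "(\<integral>\<omega>. demeaned_interaction Z (\<lambda>k. expectation (Z k)) x \<omega> * (\<Sum>j\<in>J. Z j \<omega> * c j) \<partial>M) = 0"
proof -
  have Z_meas: "Z k \<in> borel_measurable M" if "k \<in> I" for k
    using indep that by (auto simp: indep_vars_def)
  have integrable: "integrable M (\<lambda>\<omega>. demeaned_interaction Z (\<lambda>k. expectation (Z k)) x \<omega> * Z j \<omega>)"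
    if "j \<in> J" for j
    using x J that bounded Z_meas
    by (intro integrable_demeaned_interaction_mult integrable_const_bound[where B=1]) auto
  have vanish: "(\<integral>\<omega>. demeaned_interaction Z (\<lambda>k. expectation (Z k)) x \<omega> * Z j \<omega> \<partial>M) = 0"
    if "j \<in> J" for j
  proof -
    have "\<not> x \<subseteq> {j}"
      using x card_mono[of "{j}" x] by auto
    then obtain i where "i \<in> x" "i \<noteq> j" by blast
    with that J show ?thesis
      by (intro integral_demeaned_interaction_mult_eq_0[OF indep bounded x(1,2)]) auto
  qed
  have "(\<integral>\<omega>. demeaned_interaction Z (\<lambda>k. expectation (Z k)) x \<omega> * (\<Sum>j\<in>J. Z j \<omega> * c j) \<partial>M)
      = (\<Sum>j\<in>J. c j * (\<integral>\<omega>. demeaned_interaction Z (\<lambda>k. expectation (Z k)) x \<omega> * Z j \<omega> \<partial>M))"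
    using integrable by (simp add: sum_distrib_left mult_ac)
  also have "\<dots> = 0"
    using vanish by simp
  finally show ?thesis .
qed

lemma integral_demeaned_interaction_mult_eq_0_of_cond_exp_linear:
  assumes indep: "indep_vars (\<lambda>_. borel) Z {..<p}"
    and bounded: "\<And>j \<omega>. j < p \<Longrightarrow> \<omega> \<in> space M \<Longrightarrow> \<bar>Z j \<omega>\<bar> \<le> 1"
    and "integrable M f"
    and cond_exp: "AE \<omega> in M. real_cond_exp M (instr_sigma M Z p) f \<omega> = (\<Sum>j<p. Z j \<omega> * \<psi> j)"
    and x: "x \<subseteq> {..<p}" "2 \<le> card x"
  shows "(\<integral>\<omega>. demeaned_interaction Z (\<lambda>k. expectation (Z k)) x \<omega> * f \<omega> \<partial>M) = 0"
proof -
  let ?W = "demeaned_interaction Z (\<lambda>k. expectation (Z k)) x"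
  have Z_meas: "Z k \<in> borel_measurable M" if "k < p" for k
    using indep that by (auto simp: indep_vars_def)
  interpret Z_sigma: finite_measure_subalgebra M "instr_sigma M Z p"
    using Z_meas by unfold_locales (auto intro: subalgebra_instr_sigma)
  have "(\<integral>\<omega>. ?W \<omega> * f \<omega> \<partial>M) = (\<integral>\<omega>. ?W \<omega> * real_cond_exp M (instr_sigma M Z p) f \<omega> \<partial>M)"
    using x Z_meas bounded \<open>integrable M f\<close>
    by (intro Z_sigma.real_cond_exp_intg(2)[symmetric] integrable_demeaned_interaction_mult
        demeaned_interaction_measurable_instr_sigma) auto
  also have "\<dots> = (\<integral>\<omega>. ?W \<omega> * (\<Sum>j<p. Z j \<omega> * \<psi> j) \<partial>M)"
  proof (rule integral_cong_AE)
    have [measurable]: "?W \<in> borel_measurable M" "real_cond_exp M (instr_sigma M Z p) f \<in> borel_measurable M"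
        "(\<lambda>\<omega>. \<Sum>j<p. Z j \<omega> * \<psi> j) \<in> borel_measurable M"
      using x Z_meas by (auto intro!: borel_measurable_demeaned_interaction
          measurable_from_subalg[OF Z_sigma.subalg borel_measurable_cond_exp])
    show "(\<lambda>\<omega>. ?W \<omega> * real_cond_exp M (instr_sigma M Z p) f \<omega>) \<in> borel_measurable M"
      "(\<lambda>\<omega>. ?W \<omega> * (\<Sum>j<p. Z j \<omega> * \<psi> j)) \<in> borel_measurable M"
      by measurable
  qed (use cond_exp in auto)
  also have "\<dots> = 0"
    using x by (intro integral_demeaned_interaction_mult_linear_eq_0[OF indep bounded])
      (auto intro: finite_subset)
  finally show ?thesis .
qed

lemma integral_demeaned_interaction_moment:
  assumes indep: "indep_vars (\<lambda>_. borel) Z {..<p}"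
    and bounded: "\<And>j \<omega>. j < p \<Longrightarrow> \<omega> \<in> space M \<Longrightarrow> \<bar>Z j \<omega>\<bar> \<le> 1"
    and "integrable M Y0"
    and cond_exp: "AE \<omega> in M. real_cond_exp M (instr_sigma M Z p) Y0 \<omega> = (\<Sum>j<p. Z j \<omega> * \<psi> j)"
    and Y_eq: "\<And>\<omega>. \<omega> \<in> space M \<Longrightarrow> Y \<omega> = Y0 \<omega> + D \<omega> * \<beta>\<^sub>0 + (\<Sum>j<p. Z j \<omega> * \<zeta> j)"
    and int_D: "integrable M (\<lambda>\<omega>. demeaned_interaction Z (\<lambda>k. expectation (Z k)) x \<omega> * D \<omega>)"
    and x: "x \<subseteq> {..<p}" "2 \<le> card x"
  shows "(\<integral>\<omega>. demeaned_interaction Z (\<lambda>k. expectation (Z k)) x \<omega> * (Y \<omega> - D \<omega> * \<beta>) \<partial>M)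
    = (\<beta>\<^sub>0 - \<beta>) * (\<integral>\<omega>. demeaned_interaction Z (\<lambda>k. expectation (Z k)) x \<omega> * D \<omega> \<partial>M)"
proof -
  let ?W = "demeaned_interaction Z (\<lambda>k. expectation (Z k)) x"
  have Z_meas: "Z k \<in> borel_measurable M" if "k < p" for k
    using indep that by (auto simp: indep_vars_def)
  have int_Y0: "integrable M (\<lambda>\<omega>. ?W \<omega> * Y0 \<omega>)"
    using x Z_meas bounded \<open>integrable M Y0\<close> by (intro integrable_demeaned_interaction_mult) auto
  have int_Z: "integrable M (\<lambda>\<omega>. ?W \<omega> * (\<Sum>j<p. Z j \<omega> * \<zeta> j))"
  proof -
    have "integrable M (Z j)" if "j < p" for j
      using that Z_meas bounded by (intro integrable_const_bound[where B=1]) auto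
    then show ?thesis
      using x Z_meas bounded by (intro integrable_demeaned_interaction_mult) auto
  qed
  have "(\<integral>\<omega>. ?W \<omega> * (Y \<omega> - D \<omega> * \<beta>) \<partial>M)
      = (\<integral>\<omega>. ?W \<omega> * Y0 \<omega> + ?W \<omega> * (\<Sum>j<p. Z j \<omega> * \<zeta> j) + (\<beta>\<^sub>0 - \<beta>) * (?W \<omega> * D \<omega>) \<partial>M)"
    using Y_eq by (intro Bochner_Integration.integral_cong) (auto simp: algebra_simps)
  also have "\<dots> = (\<integral>\<omega>. ?W \<omega> * Y0 \<omega> \<partial>M) + (\<integral>\<omega>. ?W \<omega> * (\<Sum>j<p. Z j \<omega> * \<zeta> j) \<partial>M)
      + (\<beta>\<^sub>0 - \<beta>) * (\<integral>\<omega>. ?W \<omega> * D \<omega> \<partial>M)"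
    using int_Y0 int_Z int_D by simp
  also have "\<dots> = (\<beta>\<^sub>0 - \<beta>) * (\<integral>\<omega>. ?W \<omega> * D \<omega> \<partial>M)"
    using x integral_demeaned_interaction_mult_eq_0_of_cond_exp_linear[OF indep bounded \<open>integrable M Y0\<close> cond_exp x]
      integral_demeaned_interaction_mult_linear_eq_0[OF indep bounded, of x "{..<p}" \<zeta>]
    by (simp add: finite_subset)
  finally show ?thesis .
qed

end

theorem theorem1:
  fixes M :: "'a measure"
    and Y D :: "'a \<Rightarrow> real"
    and Z :: "nat \<Rightarrow> 'a \<Rightarrow> real"
    and p q :: nat
    and Dset :: "real set"
    and Ypo :: "real \<Rightarrow> (nat \<Rightarrow> real) \<Rightarrow> 'a \<Rightarrow> real"
    and \<beta>s :: real
    and \<zeta>s \<psi>s :: "nat \<Rightarrow> real"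
  assumes prob: "prob_space M"
    and p2: "2 \<le> p" and q2: "2 \<le> q" and qp: "q \<le> p"
    and Y_rv: "Y \<in> borel_measurable M"
    and D_rv: "D \<in> borel_measurable M"
    and Z_rv: "\<And>j. j < p \<Longrightarrow> Z j \<in> borel_measurable M"
    and Z_bin: "\<And>j \<omega>. j < p \<Longrightarrow> \<omega> \<in> space M \<Longrightarrow> Z j \<omega> \<in> {0, 1}"
    and zero_D: "0 \<in> Dset"
    and D_in: "\<And>\<omega>. \<omega> \<in> space M \<Longrightarrow> D \<omega> \<in> Dset"
    and Y_obs: "\<And>\<omega>. \<omega> \<in> space M \<Longrightarrow> Y \<omega> = Ypo (D \<omega>) (restrict (\<lambda>j. Z j \<omega>) {..<p}) \<omega>"
    and alice: "\<And>\<omega> d d' z z'. \<omega> \<in> space M \<Longrightarrow> d \<in> Dset \<Longrightarrow> d' \<in> Dset \<Longrightarrow>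
        z \<in> binvecs p \<Longrightarrow> z' \<in> binvecs p \<Longrightarrow>
        Ypo d' z' \<omega> - Ypo d z \<omega> = (d' - d) * \<beta>s + (\<Sum>j<p. (z' j - z j) * \<zeta>s j)"
    and Y00_int: "integrable M (Ypo 0 (restrict (\<lambda>_. 0) {..<p}))"
    and cond_exp: "AE \<omega> in M. real_cond_exp M (instr_sigma M Z p) (Ypo 0 (restrict (\<lambda>_. 0) {..<p})) \<omega>
        = (\<Sum>j<p. Z j \<omega> * \<psi>s j)"
    and indep: "prob_space.indep_vars M (\<lambda>_. borel) Z {..<p}"
    and int_Y: "\<And>x. x \<in> interaction_index p q \<Longrightarrow>
        integrable M (\<lambda>\<omega>. demeaned_interaction Z (\<lambda>j. prob_space.expectation M (Z j)) x \<omega> * Y \<omega>)"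
    and int_D: "\<And>x. x \<in> interaction_index p q \<Longrightarrow>
        integrable M (\<lambda>\<omega>. demeaned_interaction Z (\<lambda>j. prob_space.expectation M (Z j)) x \<omega> * D \<omega>)"
    and relevance: "(\<lambda>x\<in>interaction_index p q. - prob_space.expectation M
          (\<lambda>\<omega>. demeaned_interaction Z (\<lambda>j. prob_space.expectation M (Z j)) x \<omega> * D \<omega>))
        \<noteq> (\<lambda>x\<in>interaction_index p q. 0)"
  shows "{\<beta>::real. (\<lambda>x\<in>interaction_index p q. prob_space.expectation M
            (\<lambda>\<omega>. demeaned_interaction Z (\<lambda>j. prob_space.expectation M (Z j)) x \<omega> * (Y \<omega> - D \<omega> * \<beta>)))
          = (\<lambda>x\<in>interaction_index p q. 0)} = {\<beta>s}"
proof -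
  interpret prob_space M by (rule prob)
  let ?W = "demeaned_interaction Z (\<lambda>j. expectation (Z j))"
  let ?Y00 = "Ypo 0 (restrict (\<lambda>_. 0) {..<p})"
  have Z_le_1: "\<bar>Z j \<omega>\<bar> \<le> 1" if "j < p" "\<omega> \<in> space M" for j \<omega>
    using Z_bin[OF that] by auto
  have Y_eq: "Y \<omega> = ?Y00 \<omega> + D \<omega> * \<beta>s + (\<Sum>j<p. Z j \<omega> * \<zeta>s j)" if "\<omega> \<in> space M" for \<omega>
  proof -
    have "restrict (\<lambda>j. Z j \<omega>) {..<p} \<in> binvecs p"
      using Z_bin that by (auto simp: binvecs_def)
    from alice_outcome_decomposition[where Ypo = "\<lambda>d z. Ypo d z \<omega>", OF alice[OF that] zero_D
        D_in[OF that] this]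
    show ?thesis
      using Y_obs[OF that] by simp
  qed
  have moment: "expectation (\<lambda>\<omega>. ?W x \<omega> * (Y \<omega> - D \<omega> * \<beta>)) = (\<beta>s - \<beta>) * expectation (\<lambda>\<omega>. ?W x \<omega> * D \<omega>)"
    if "x \<in> interaction_index p q" for x \<beta>
    using that by (intro integral_demeaned_interaction_moment[OF indep Z_le_1 Y00_int cond_exp Y_eq int_D])
      (auto simp: interaction_index_def)
  have "\<exists>x\<in>interaction_index p q. expectation (\<lambda>\<omega>. ?W x \<omega> * D \<omega>) \<noteq> 0"
    using relevance by (metis (no_types, lifting) neg_equal_0_iff_equal restrict_ext)
  then show ?thesis
    by (simp add: moment unique_solution_restrict_mult_eq_0 cong: restrict_cong)
qed

end
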